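(* For every synchronous one-dimensional cellular automaton $A=(S,N,f,\mathbb{Z})$ with first neighbors neighborhood $N=(-1,0,1)$, there is an asynchronous cellular automaton $\mathbb{B}=(S\times\{1,2,3\},N,f',\mathbb{Z})$ which invariantly simulates $A$ in $1.5$-linear time, i.e. with integers $k,l$ satisfying $l/k=3/2$ in the definition of invariant simulation.
   Context: A one-dimensional cellular automaton (CA) $(S,N,f,\mathbb{Z})$: finite state set $S$, neighborhood vector $N=(n_1,\dots,n_k)$, local rule $f:S^k\to S$; configurations $c:\mathbb{Z}\to S$; global map $G(c)(i)=f(c(i+n_1),\dots,c(i+n_k))$. An asynchronous CA (ACA) evolves under an update schedule $\zeta:\mathbb{N}\to\mathcal{P}(\mathbb{Z})$ in which every cell appears in infinitely many $\zeta(t)$, via $c_{t+1}=G_{\zeta(t)}(c_t)$, with $G_D(c)(i)=G(c)(i)$ if $i\in D$ and $c(i)$ otherwise. The update history from $c_0$ is the sequence $h_0=c_0,h_1,\dots$ where $h_t(i)$ is the state of cell $i$ after its $t$-th genuine state change (undefined if there is none). $\mathbb{B}$ has invariant histories on $c_0$ if every update schedule gives the same history. Direct simulation: $F_A\prec F_B$ if there is $\psi:S^A\to\mathcal{P}(S')\setminus\{\varnothing\}$ with pairwise disjoint images such that for every configuration $c$, $\{F_B(c'):c'\in\psi(c)\}\subseteq\psi(F_A(c))$, where $\psi(c)=\{c': c'(i)\in\psi(c(i))\ \forall i\}$. Unpacking map $o_m$ ($m$ a positive integer): the bijection $(S^{m})^{\mathbb{Z}}\to S^{\mathbb{Z}}$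 with $o_m(c)(mi+r)=c(i)(r)$, $r\in\mathbb{Z}_m$. Translation: $\tau_v(c)(i)=c(i-v)$. Let $H^B$ map each cell in state $h_t(i)$ to $h_{t+1}(i)$ of its invariant update history under $\mathbb{B}$ (undefined where histories are not invariant). $\mathbb{B}$ invariantly simulates $A$ if there exist $m$, $o_m$, a translation $\tau_v$ and positive integers $k,l$ with $(G^A)^k\prec o_m^{-1}\circ(H^B)^l\circ o_m\circ\tau_v$; $l/k$ is the linear time parameter. *)

theory Defs
  imports Complex_Main
begin

datatype three = Q1 | Q2 | Q3

definition sync_global :: "('s \<Rightarrow> 's \<Rightarrow> 's \<Rightarrow> 's) \<Rightarrow> (int \<Rightarrow> 's) \<Rightarrow> (int \<Rightarrow> 's)" where
  "sync_global f c = (\<lambda>i. f (c (i - 1)) (c i) (c (i + 1)))"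

definition async_global :: "('s \<Rightarrow> 's \<Rightarrow> 's \<Rightarrow> 's) \<Rightarrow> int set \<Rightarrow> (int \<Rightarrow> 's) \<Rightarrow> (int \<Rightarrow> 's)" where
  "async_global f D c = (\<lambda>i. if i \<in> D then f (c (i - 1)) (c i) (c (i + 1)) else c i)"

definition admissible_schedule :: "(nat \<Rightarrow> int set) \<Rightarrow> bool" where
  "admissible_schedule \<zeta> = (\<forall>i. infinite {t. i \<in> \<zeta> t})"

primrec async_run :: "('s \<Rightarrow> 's \<Rightarrow> 's \<Rightarrow> 's) \<Rightarrow> (nat \<Rightarrow> int set) \<Rightarrow> (int \<Rightarrow> 's) \<Rightarrow> nat \<Rightarrow> (int \<Rightarrow> 's)" where
  "async_run f \<zeta> c0 0 = c0"
| "async_run f \<zeta> c0 (Suc t) = async_global f (\<zeta> t) (async_run f \<zeta> c0 t)"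

definition n_changes :: "('s \<Rightarrow> 's \<Rightarrow> 's \<Rightarrow> 's) \<Rightarrow> (nat \<Rightarrow> int set) \<Rightarrow> (int \<Rightarrow> 's) \<Rightarrow> int \<Rightarrow> nat \<Rightarrow> nat" where
  "n_changes f \<zeta> c0 i s = card {u. u < s \<and> async_run f \<zeta> c0 (Suc u) i \<noteq> async_run f \<zeta> c0 u i}"

text \<open>Update history: h_t(i) is the state of cell i after its t-th genuine change
(h_0 = c0), None if cell i changes fewer than t times.\<close>
definition update_history :: "('s \<Rightarrow> 's \<Rightarrow> 's \<Rightarrow> 's) \<Rightarrow> (nat \<Rightarrow> int set) \<Rightarrow> (int \<Rightarrow> 's) \<Rightarrow> nat \<Rightarrow> int \<Rightarrow> 's option" where
  "update_history f \<zeta> c0 t i =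
     (if \<exists>s. n_changes f \<zeta> c0 i s = t
      then Some (async_run f \<zeta> c0 (LEAST s. n_changes f \<zeta> c0 i s = t) i)
      else None)"

definition invariant_histories :: "('s \<Rightarrow> 's \<Rightarrow> 's \<Rightarrow> 's) \<Rightarrow> (int \<Rightarrow> 's) \<Rightarrow> bool" where
  "invariant_histories f c0 =
     (\<forall>\<zeta>1 \<zeta>2. admissible_schedule \<zeta>1 \<and> admissible_schedule \<zeta>2 \<longrightarrow>
        update_history f \<zeta>1 c0 = update_history f \<zeta>2 c0)"

text \<open>The synchronous schedule (\<lambda>_. UNIV) is admissible, so it computes the invariant history.\<close>
definition H_map :: "('s \<Rightarrow> 's \<Rightarrow> 's \<Rightarrow> 's) \<Rightarrow> (int \<Rightarrow> 's) \<Rightarrow> (int \<Rightarrow> 's) option" where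
  "H_map f c =
     (if invariant_histories f c \<and> (\<forall>i. update_history f (\<lambda>_. UNIV) c 1 i \<noteq> None)
      then Some (\<lambda>i. the (update_history f (\<lambda>_. UNIV) c 1 i))
      else None)"

primrec opt_iter :: "('a \<Rightarrow> 'a option) \<Rightarrow> nat \<Rightarrow> 'a \<Rightarrow> 'a option" where
  "opt_iter F 0 c = Some c"
| "opt_iter F (Suc n) c = Option.bind (opt_iter F n c) F"

definition unpack :: "nat \<Rightarrow> (int \<Rightarrow> 'a list) \<Rightarrow> (int \<Rightarrow> 'a)" where
  "unpack m c = (\<lambda>j. c (j div int m) ! nat (j mod int m))"

definition pack :: "nat \<Rightarrow> (int \<Rightarrow> 'a) \<Rightarrow> (int \<Rightarrow> 'a list)" where
  "pack m d = (\<lambda>i. map (\<lambda>r. d (int m * i + int r)) [0..<m])"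

definition translate :: "int \<Rightarrow> (int \<Rightarrow> 'a) \<Rightarrow> (int \<Rightarrow> 'a)" where
  "translate v c = (\<lambda>i. c (i - v))"

definition cfg_set :: "('s \<Rightarrow> 'b set) \<Rightarrow> (int \<Rightarrow> 's) \<Rightarrow> (int \<Rightarrow> 'b) set" where
  "cfg_set \<psi> c = {c'. \<forall>i. c' i \<in> \<psi> (c i)}"

definition direct_sim :: "'b set \<Rightarrow> ((int \<Rightarrow> 's) \<Rightarrow> (int \<Rightarrow> 's)) \<Rightarrow> ((int \<Rightarrow> 'b) \<Rightarrow> (int \<Rightarrow> 'b) option) \<Rightarrow> bool" where
  "direct_sim S' FA FB =
     (\<exists>\<psi> :: 's \<Rightarrow> 'b set.
        (\<forall>s. \<psi> s \<noteq> {} \<and> \<psi> s \<subseteq> S') \<and>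
        (\<forall>s1 s2. s1 \<noteq> s2 \<longrightarrow> \<psi> s1 \<inter> \<psi> s2 = {}) \<and>
        (\<forall>c. \<forall>c' \<in> cfg_set \<psi> c. \<exists>d. FB c' = Some d \<and> d \<in> cfg_set \<psi> (FA c)))"

definition invariantly_simulates ::
  "('s \<Rightarrow> 's \<Rightarrow> 's \<Rightarrow> 's) \<Rightarrow> ('t \<Rightarrow> 't \<Rightarrow> 't \<Rightarrow> 't) \<Rightarrow> real \<Rightarrow> bool" where
  "invariantly_simulates f g r =
     (\<exists>(m::nat) (v::int) (k::nat) (l::nat).
        m > 0 \<and> k > 0 \<and> l > 0 \<and> real l / real k = r \<and>
        direct_sim {xs :: 't list. length xs = m}
          ((sync_global f) ^^ k)
          (\<lambda>c'. map_option (pack m) (opt_iter (H_map g) l (unpack m (translate v c')))))"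

end

theory Submission
  imports Defs "HOL-Library.Infinite_Set"
begin

text \<open>The label in \<open>{1,2,3}\<close> is a clock modulo 3. A cell of the asynchronous automaton may
move only when both of its neighbours are one tick ahead of it, and it then advances by two ticks.
If initially the labels of even and odd cells are \<open>t\<close> and \<open>t + 1\<close>, neighbouring cells always stay
exactly one tick apart; a cell whose clock is a local minimum stays enabled until it is updated,
and whatever the schedule, every cell passes through the same states as under the deterministic
dynamics "update all even cells, then all odd cells". So histories are invariant and \<open>H\<^sup>B\<close> is one
such even-odd step.

A cell of \<open>A\<close> in state \<open>y\<close> is simulated by an even and an odd cell both holding \<open>y\<close>, and three
even-odd steps perform two steps of \<open>A\<close>. The even cell stores \<open>x + y\<close>, where \<open>x\<close> is the state of
the block to its left and \<open>+\<close> is a cyclic group law on the finite set of states; the odd cell,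
knowing \<open>y\<close>, subtracts it from both neighbours to recover the states on either side and applies
the rule of \<open>A\<close>. Two more phases do the same with the roles of even and odd cells exchanged,
which leaves the result one block to the right; the translation in the simulation absorbs this.\<close>

section \<open>Cyclic addition on a finite type\<close>

definition state_of :: "nat \<Rightarrow> 's::finite" where
  "state_of = (SOME h. bij_betw h {..<card (UNIV :: 's set)} UNIV)"

definition state_index :: "'s::finite \<Rightarrow> nat" where
  "state_index = the_inv_into {..<card (UNIV :: 's set)} state_of"

lemma bij_betw_state_of: "bij_betw (state_of :: nat \<Rightarrow> 's::finite) {..<card (UNIV :: 's set)} UNIV"
proof -
  have "\<exists>h. bij_betw h {..<card (UNIV :: 's set)} (UNIV :: 's set)"
    using ex_bij_betw_nat_finite[of "UNIV :: 's set"] by (simp add: lessThan_atLeast0)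
  then show ?thesis
    unfolding state_of_def by (rule someI_ex)
qed

lemma state_of_inj_surj:
  "inj_on (state_of :: nat \<Rightarrow> 's::finite) {..<card (UNIV :: 's set)}"
  "(state_of :: nat \<Rightarrow> 's::finite) ` {..<card (UNIV :: 's set)} = UNIV"
  using bij_betw_state_of[where 's = 's] by (simp_all add: bij_betw_def)

lemma state_index_less: "state_index (x :: 's::finite) < card (UNIV :: 's set)"
  unfolding state_index_def
  using the_inv_into_into[OF state_of_inj_surj(1), of x "{..<card (UNIV :: 's set)}"]
  by (simp add: state_of_inj_surj(2))

lemma state_of_state_index [simp]: "state_of (state_index x) = x"
  unfolding state_index_def by (simp add: state_of_inj_surj f_the_inv_into_f)

lemma state_index_state_of: "n < card (UNIV :: 's set) \<Longrightarrow> state_index (state_of n :: 's::finite) = n"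
  unfolding state_index_def by (simp add: state_of_inj_surj the_inv_into_f_f)

definition cyclic_add :: "'s::finite \<Rightarrow> 's \<Rightarrow> 's" where
  "cyclic_add x y = state_of ((state_index x + state_index y) mod card (UNIV :: 's set))"

definition cyclic_sub :: "'s::finite \<Rightarrow> 's \<Rightarrow> 's" where
  "cyclic_sub x y = state_of ((state_index x + (card (UNIV :: 's set) - state_index y)) mod card (UNIV :: 's set))"

lemma cyclic_add_commute: "cyclic_add x y = cyclic_add y x"
  by (simp add: cyclic_add_def add.commute)

lemma cyclic_sub_add_cancel: "cyclic_sub (cyclic_add x y) y = (x :: 's::finite)"
proof -
  let ?n = "card (UNIV :: 's set)"
  have "state_index (cyclic_add x y) = (state_index x + state_index y) mod ?n"
    unfolding cyclic_add_def by (rule state_index_state_of) (simp add: card_gt_0_iff)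
  then have "(state_index (cyclic_add x y) + (?n - state_index y)) mod ?n
      = (state_index x + state_index y + (?n - state_index y)) mod ?n"
    by (simp add: mod_add_left_eq)
  also have "\<dots> = state_index x"
    using state_index_less[of x] state_index_less[of y] by simp
  finally show ?thesis
    unfolding cyclic_sub_def by simp
qed

lemma cyclic_sub_add_cancel_left: "cyclic_sub (cyclic_add y x) y = (x :: 's::finite)"
  by (simp add: cyclic_add_commute cyclic_sub_add_cancel)

section \<open>Clocked rules and the even-odd dynamics\<close>

fun tick :: "three \<Rightarrow> three" where
  "tick Q1 = Q2"
| "tick Q2 = Q3"
| "tick Q3 = Q1"

definition clock_label :: "int \<Rightarrow> three" where
  "clock_label t = (if t mod 3 = 0 then Q1 else if t mod 3 = 1 then Q2 else Q3)"

lemma clock_label_eq_iff: "clock_label s = clock_label t \<longleftrightarrow> s mod 3 = t mod 3"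
proof -
  have "s mod 3 \<in> {0, 1, 2}" "t mod 3 \<in> {0, 1, 2}" by auto
  then show ?thesis unfolding clock_label_def by auto
qed

lemma tick_clock_label: "tick (clock_label t) = clock_label (t + 1)"
proof -
  have "t mod 3 = 0 \<and> (t + 1) mod 3 = 1 \<or> t mod 3 = 1 \<and> (t + 1) mod 3 = 2
      \<or> t mod 3 = 2 \<and> (t + 1) mod 3 = 0"
    by presburger
  then show ?thesis unfolding clock_label_def by auto
qed

lemma clock_label_add_2_neq: "clock_label (t + 2) \<noteq> clock_label t"
  unfolding clock_label_eq_iff by presburger

lemma tick_clock_label_iff:
  assumes "\<bar>s - t\<bar> = 1"
  shows "clock_label s = tick (clock_label t) \<longleftrightarrow> s = t + 1"
  unfolding tick_clock_label clock_label_eq_iff using assms by presburger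

definition clocked ::
    "(three \<Rightarrow> 's \<Rightarrow> 's \<Rightarrow> 's \<Rightarrow> 's) \<Rightarrow> 's \<times> three \<Rightarrow> 's \<times> three \<Rightarrow> 's \<times> three \<Rightarrow> 's \<times> three" where
  "clocked R x y z =
     (if snd x = tick (snd y) \<and> snd z = tick (snd y)
      then (R (snd y) (fst x) (fst y) (fst z), tick (tick (snd y))) else y)"

definition even_odd_step :: "('t \<Rightarrow> 't \<Rightarrow> 't \<Rightarrow> 't) \<Rightarrow> (int \<Rightarrow> 't) \<Rightarrow> (int \<Rightarrow> 't)" where
  "even_odd_step g c = async_global g {j. odd j} (async_global g {j. even j} c)"

lemma even_odd_step_even:
  "even j \<Longrightarrow> even_odd_step g c j = g (c (j - 1)) (c j) (c (j + 1))"
  by (simp add: even_odd_step_def async_global_def)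

lemma even_odd_step_odd:
  "odd j \<Longrightarrow> even_odd_step g c j = g (even_odd_step g c (j - 1)) (c j) (even_odd_step g c (j + 1))"
  by (simp add: even_odd_step_def async_global_def)

definition well_clocked :: "(int \<Rightarrow> 's \<times> three) \<Rightarrow> int \<Rightarrow> bool" where
  "well_clocked d a \<longleftrightarrow> (\<forall>j. snd (d j) = clock_label (a + j mod 2))"

lemma clocked_fires:
  "snd x = tick (snd y) \<Longrightarrow> snd z = tick (snd y) \<Longrightarrow>
   clocked R x y z = (R (snd y) (fst x) (fst y) (fst z), tick (tick (snd y)))"
  by (simp add: clocked_def)

lemma well_clocked_even_odd_step:
  assumes "well_clocked d a"
  shows "well_clocked (even_odd_step (clocked R) d) (a + 2)"
  unfolding well_clocked_def
proof
  fix j :: int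
  have label: "snd (d k) = clock_label (a + k mod 2)" for k
    using assms by (simp add: well_clocked_def)
  have even_label: "snd (even_odd_step (clocked R) d k) = clock_label (a + 2)" if "even k" for k
  proof -
    have "(k - 1) mod 2 = 1" "(k + 1) mod 2 = 1" "k mod 2 = 0"
      using that by presburger+
    then show ?thesis
      using that by (simp add: even_odd_step_even clocked_fires label tick_clock_label add.assoc)
  qed
  show "snd (even_odd_step (clocked R) d j) = clock_label (a + 2 + j mod 2)"
  proof (cases "even j")
    case True
    then show ?thesis by (simp add: even_label)
  next
    case False
    then have "even (j - 1)" "even (j + 1)" "j mod 2 = 1" by presburger+
    with False show ?thesis
      by (simp add: even_odd_step_odd clocked_fires label even_label tick_clock_label add.assoc)
  qed
qed

lemma well_clocked_funpow_even_odd_step: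
  assumes "well_clocked d a"
  shows "well_clocked ((even_odd_step (clocked R) ^^ n) d) (a + 2 * int n)"
proof (induction n)
  case (Suc n)
  have "a + 2 * int (Suc n) = a + 2 * int n + 2" by simp
  then show ?case
    using well_clocked_even_odd_step[where R = R, OF Suc.IH] by (simp only: funpow.simps comp_apply)
qed (simp add: assms)

lemma funpow_even_odd_step_Suc_neq:
  assumes "well_clocked d a"
  shows "(even_odd_step (clocked R) ^^ Suc n) d j \<noteq> (even_odd_step (clocked R) ^^ n) d j"
proof -
  have label: "snd ((even_odd_step (clocked R) ^^ m) d j) = clock_label (a + 2 * int m + j mod 2)" for m
    using well_clocked_funpow_even_odd_step[OF assms] by (simp add: well_clocked_def)
  have "a + 2 * int (Suc n) + j mod 2 = (a + 2 * int n + j mod 2) + 2" by simp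
  then have "snd ((even_odd_step (clocked R) ^^ Suc n) d j) \<noteq> snd ((even_odd_step (clocked R) ^^ n) d j)"
    unfolding label using clock_label_add_2_neq by metis
  then show ?thesis by metis
qed

section \<open>Invariant histories of well-clocked configurations\<close>

lemma n_changes_0 [simp]: "n_changes g \<zeta> c j 0 = 0"
  by (simp add: n_changes_def)

lemma n_changes_Suc:
  "n_changes g \<zeta> c j (Suc s) = n_changes g \<zeta> c j s +
     (if async_run g \<zeta> c (Suc s) j \<noteq> async_run g \<zeta> c s j then 1 else 0)"
proof -
  let ?P = "\<lambda>u. async_run g \<zeta> c (Suc u) j \<noteq> async_run g \<zeta> c u j"
  have "{u. u < Suc s \<and> ?P u} = (if ?P s then insert s {u. u < s \<and> ?P u} else {u. u < s \<and> ?P u})"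
    by (auto simp: less_Suc_eq)
  then show ?thesis by (simp add: n_changes_def)
qed

context
  fixes R :: "three \<Rightarrow> 's \<Rightarrow> 's \<Rightarrow> 's \<Rightarrow> 's" and \<zeta> :: "nat \<Rightarrow> int set"
    and d :: "int \<Rightarrow> 's \<times> three" and a :: int
  assumes d_well_clocked: "well_clocked d a"
begin

abbreviation run :: "nat \<Rightarrow> int \<Rightarrow> 's \<times> three" where
  "run \<equiv> async_run (clocked R) \<zeta> d"

abbreviation changes :: "int \<Rightarrow> nat \<Rightarrow> nat" where
  "changes \<equiv> n_changes (clocked R) \<zeta> d"

abbreviation even_odd_run :: "nat \<Rightarrow> int \<Rightarrow> 's \<times> three" where
  "even_odd_run n \<equiv> (even_odd_step (clocked R) ^^ n) d"

text \<open>The label of cell \<open>j\<close> at time \<open>s\<close> is \<open>clock_label (a + vtime s j)\<close>.\<close>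

definition vtime :: "nat \<Rightarrow> int \<Rightarrow> int" where
  "vtime s j = 2 * int (changes j s) + j mod 2"

definition enabled :: "nat \<Rightarrow> int \<Rightarrow> bool" where
  "enabled s j \<longleftrightarrow> vtime s (j - 1) = vtime s j + 1 \<and> vtime s (j + 1) = vtime s j + 1"

definition tracks_even_odd_run :: "nat \<Rightarrow> bool" where
  "tracks_even_odd_run s \<longleftrightarrow>
     (\<forall>j. run s j = even_odd_run (changes j s) j \<and> \<bar>vtime s (j + 1) - vtime s j\<bar> = 1)"

lemma clocked_on_tracking_run:
  assumes tracks: "tracks_even_odd_run s"
  shows "clocked R (run s (j - 1)) (run s j) (run s (j + 1))
           = (if enabled s j then even_odd_run (Suc (changes j s)) j else run s j)"
proof -
  have run: "run s k = even_odd_run (changes k s) k" for k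
    using tracks by (simp add: tracks_even_odd_run_def)
  have label: "snd (run s k) = clock_label (a + vtime s k)" for k
    using well_clocked_funpow_even_odd_step[OF d_well_clocked, where R = R and n = "changes k s"]
    by (simp add: run well_clocked_def vtime_def add.assoc)
  have "\<bar>vtime s (j - 1) - vtime s j\<bar> = 1" "\<bar>vtime s (j + 1) - vtime s j\<bar> = 1"
    using tracks[unfolded tracks_even_odd_run_def, rule_format, of "j - 1"]
      tracks[unfolded tracks_even_odd_run_def, rule_format, of j] by (simp_all add: abs_minus_commute)
  then have fires_iff: "(snd (run s (j - 1)) = tick (snd (run s j)) \<and> snd (run s (j + 1)) = tick (snd (run s j)))
      \<longleftrightarrow> enabled s j"
    unfolding label enabled_def by (simp add: tick_clock_label_iff)
  show ?thesis
  proof (cases "enabled s j")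
    case False
    then show ?thesis using fires_iff unfolding clocked_def by auto
  next
    case True
    then have up: "vtime s (j - 1) = vtime s j + 1" "vtime s (j + 1) = vtime s j + 1"
      by (simp_all add: enabled_def)
    show ?thesis
    proof (cases "even j")
      case even: True
      then have "j mod 2 = 0" "(j - 1) mod 2 = 1" "(j + 1) mod 2 = 1" by presburger+
      then have "changes (j - 1) s = changes j s" "changes (j + 1) s = changes j s"
        using up by (simp_all add: vtime_def)
      then show ?thesis
        using True even by (simp add: run even_odd_step_even)
    next
      case odd: False
      then have "j mod 2 = 1" "(j - 1) mod 2 = 0" "(j + 1) mod 2 = 0" by presburger+
      then have "changes (j - 1) s = Suc (changes j s)" "changes (j + 1) s = Suc (changes j s)"
        using up by (simp_all add: vtime_def)
      then show ?thesis
        using True odd by (simp add: run even_odd_step_odd)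
    qed
  qed
qed

lemma run_Suc_if_tracks:
  assumes "tracks_even_odd_run s"
  shows "run (Suc s) j = (if j \<in> \<zeta> s \<and> enabled s j then even_odd_run (Suc (changes j s)) j else run s j)"
  using clocked_on_tracking_run[OF assms, of j] by (simp add: async_global_def)

lemma changes_Suc_if_tracks:
  assumes "tracks_even_odd_run s"
  shows "changes j (Suc s) = changes j s + (if j \<in> \<zeta> s \<and> enabled s j then 1 else 0)"
proof -
  have "run s j = even_odd_run (changes j s) j"
    using assms by (simp add: tracks_even_odd_run_def)
  then have "run (Suc s) j \<noteq> run s j \<longleftrightarrow> j \<in> \<zeta> s \<and> enabled s j"
    unfolding run_Suc_if_tracks[OF assms]
    using funpow_even_odd_step_Suc_neq[OF d_well_clocked, where R = R and n = "changes j s" and j = j]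
    by simp
  then show ?thesis
    by (simp only: n_changes_Suc)
qed

lemma tracks_even_odd_run_invariant: "tracks_even_odd_run s"
proof (induction s)
  case 0
  have "\<bar>(j + 1) mod 2 - j mod 2\<bar> = 1" for j :: int
    by presburger
  then show ?case by (simp add: tracks_even_odd_run_def vtime_def)
next
  case (Suc s)
  have vtime_Suc: "vtime (Suc s) j = vtime s j + (if j \<in> \<zeta> s \<and> enabled s j then 2 else 0)" for j
    using changes_Suc_if_tracks[OF Suc.IH, of j] by (simp add: vtime_def)
  show ?case
    unfolding tracks_even_odd_run_def
  proof
    fix j
    have "\<bar>vtime s (j + 1) - vtime s j\<bar> = 1"
      using Suc.IH by (simp add: tracks_even_odd_run_def)
    moreover have "enabled s j \<Longrightarrow> vtime s (j + 1) = vtime s j + 1"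
      and "enabled s (j + 1) \<Longrightarrow> vtime s j = vtime s (j + 1) + 1"
      by (simp_all add: enabled_def)
    ultimately have "\<bar>vtime (Suc s) (j + 1) - vtime (Suc s) j\<bar> = 1"
      unfolding vtime_Suc by auto
    moreover have "run (Suc s) j = even_odd_run (changes j (Suc s)) j"
      using Suc.IH run_Suc_if_tracks[OF Suc.IH, of j] changes_Suc_if_tracks[OF Suc.IH, of j]
      by (simp add: tracks_even_odd_run_def)
    ultimately show "run (Suc s) j = even_odd_run (changes j (Suc s)) j
        \<and> \<bar>vtime (Suc s) (j + 1) - vtime (Suc s) j\<bar> = 1"
      by blast
  qed
qed

lemma vtime_Suc: "vtime (Suc s) j = vtime s j + (if j \<in> \<zeta> s \<and> enabled s j then 2 else 0)"
  using changes_Suc_if_tracks[OF tracks_even_odd_run_invariant, where s = s and j = j] by (simp add: vtime_def)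

lemma vtime_neighbour: "\<bar>vtime s (j + 1) - vtime s j\<bar> = 1"
  using tracks_even_odd_run_invariant[of s] by (simp add: tracks_even_odd_run_def)

lemma vtime_mono: "s \<le> s' \<Longrightarrow> vtime s j \<le> vtime s' j"
proof (induction s' rule: dec_induct)
  case (step s')
  then show ?case using vtime_Suc[of s' j] by simp
qed simp

text \<open>The neighbours of an enabled cell are ahead of it and hence not enabled themselves, so
nothing but an update of the cell itself can change its situation.\<close>

lemma enabled_until_fired:
  assumes "enabled s j"
  shows "vtime (s + k) j > vtime s j \<or> (enabled (s + k) j \<and> vtime (s + k) j = vtime s j)"
proof (induction k)
  case (Suc k)
  show ?case
  proof (cases "vtime (s + k) j > vtime s j")
    case True
    then show ?thesis using vtime_mono[of "s + k" "s + Suc k" j] by simp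
  next
    case False
    with Suc.IH have en: "enabled (s + k) j" and same: "vtime (s + k) j = vtime s j"
      by auto
    then have "\<not> enabled (s + k) (j - 1)" "\<not> enabled (s + k) (j + 1)"
      by (auto simp: enabled_def)
    then have "vtime (s + Suc k) (j - 1) = vtime (s + k) (j - 1)"
      "vtime (s + Suc k) (j + 1) = vtime (s + k) (j + 1)"
      by (simp_all add: vtime_Suc)
    moreover have "vtime (s + Suc k) j \<in> {vtime (s + k) j, vtime (s + k) j + 2}"
      by (simp add: vtime_Suc)
    ultimately show ?thesis
      using en same by (auto simp: enabled_def)
  qed
qed (simp add: assms)

lemma vtime_unbounded:
  assumes fair: "admissible_schedule \<zeta>"
  shows "\<exists>s. vtime s j \<ge> int T"
proof (induction T arbitrary: j)
  case 0
  show ?case by (auto simp: vtime_def)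
next
  case (Suc T)
  from Suc.IH[of "j - 1"] obtain s1 where s1: "vtime s1 (j - 1) \<ge> int T" ..
  from Suc.IH[of j] obtain s2 where s2: "vtime s2 j \<ge> int T" ..
  from Suc.IH[of "j + 1"] obtain s3 where s3: "vtime s3 (j + 1) \<ge> int T" ..
  define s0 where "s0 = max s1 (max s2 s3)"
  have "s1 \<le> s0" "s2 \<le> s0" "s3 \<le> s0"
    by (simp_all add: s0_def)
  then have s0: "vtime s0 (j - 1) \<ge> int T" "vtime s0 j \<ge> int T" "vtime s0 (j + 1) \<ge> int T"
    using s1 s2 s3 vtime_mono by (meson order_trans)+
  show ?case
  proof (cases "vtime s0 j \<ge> int (Suc T)")
    case True
    then show ?thesis by blast
  next
    case False
    then have "vtime s0 j = int T" using s0 by simp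
    moreover have "\<bar>vtime s0 j - vtime s0 (j - 1)\<bar> = 1" "\<bar>vtime s0 (j + 1) - vtime s0 j\<bar> = 1"
      using vtime_neighbour[of s0 "j - 1"] vtime_neighbour[of s0 j] by simp_all
    ultimately have en: "enabled s0 j" and at_T: "vtime s0 j = int T"
      using s0 by (auto simp: enabled_def)
    obtain s' where "s' \<ge> s0" and scheduled: "j \<in> \<zeta> s'"
      using fair unfolding admissible_schedule_def infinite_nat_iff_unbounded_le by blast
    then obtain k where s': "s' = s0 + k"
      using le_Suc_ex by blast
    from enabled_until_fired[OF en, of k] show ?thesis
    proof
      assume "vtime (s0 + k) j > vtime s0 j"
      then show ?thesis using at_T s' by (intro exI[of _ s']) simp
    next
      assume "enabled (s0 + k) j \<and> vtime (s0 + k) j = vtime s0 j"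
      then have "vtime (Suc s') j = int T + 2"
        using scheduled at_T s' by (simp add: vtime_Suc)
      then show ?thesis by (intro exI[of _ "Suc s'"]) simp
    qed
  qed
qed

lemma update_history_clocked:
  assumes fair: "admissible_schedule \<zeta>"
  shows "update_history (clocked R) \<zeta> d t j = Some (even_odd_run t j)"
proof -
  obtain s1 where "vtime s1 j \<ge> int (2 * t)"
    using vtime_unbounded[OF fair] by blast
  moreover have "j mod 2 < 2" by simp
  ultimately have "int t \<le> int (changes j s1)"
    by (simp add: vtime_def)
  moreover have "\<forall>u < s1. \<bar>int (changes j (u + 1)) - int (changes j u)\<bar> \<le> 1"
    by (simp add: n_changes_Suc)
  ultimately have reached: "\<exists>s. changes j s = t"
    using nat0_intermed_int_val[of s1 "\<lambda>s. int (changes j s)" "int t"] by auto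
  let ?s = "LEAST s. changes j s = t"
  have "changes j ?s = t"
    using reached by (rule LeastI_ex)
  then have "run ?s j = even_odd_run t j"
    using tracks_even_odd_run_invariant[of ?s] by (simp add: tracks_even_odd_run_def)
  then show ?thesis
    using reached by (simp add: update_history_def)
qed

end

lemma H_map_clocked:
  assumes "well_clocked d a"
  shows "H_map (clocked R) d = Some (even_odd_step (clocked R) d)"
proof -
  have history: "update_history (clocked R) \<zeta> d = (\<lambda>t j. Some ((even_odd_step (clocked R) ^^ t) d j))"
    if "admissible_schedule \<zeta>" for \<zeta>
    using update_history_clocked[OF assms that] by blast
  have "admissible_schedule (\<lambda>_. UNIV)"
    by (simp add: admissible_schedule_def)
  with history have "invariant_histories (clocked R) d"
    and "update_history (clocked R) (\<lambda>_. UNIV) d 1 = (\<lambda>j. Some (even_odd_step (clocked R) d j))"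
    by (simp_all add: invariant_histories_def)
  then show ?thesis
    by (simp add: H_map_def)
qed

lemma opt_iter_H_map_clocked:
  assumes "well_clocked d a"
  shows "opt_iter (H_map (clocked R)) n d = Some ((even_odd_step (clocked R) ^^ n) d)"
proof (induction n)
  case (Suc n)
  then show ?case
    using H_map_clocked[OF well_clocked_funpow_even_odd_step[OF assms, where R = R and n = n]]
    by simp
qed simp

section \<open>Three even-odd steps simulate two synchronous steps\<close>

definition interleave :: "(int \<Rightarrow> 'a) \<Rightarrow> (int \<Rightarrow> 'a) \<Rightarrow> int \<Rightarrow> 'a" where
  "interleave A B j = (if even j then A (j div 2) else B (j div 2))"

lemma interleave_even [simp]: "interleave A B (2 * i) = A i"
  by (simp add: interleave_def)

lemma interleave_odd [simp]: "interleave A B (2 * i + 1) = B i"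
  by (simp add: interleave_def)

lemma interleave_cases [case_names even odd]:
  fixes j :: int
  obtains i where "j = 2 * i" | i where "j = 2 * i + 1"
  by (cases "even j") (auto elim: evenE oddE)

lemma even_odd_step_interleave:
  assumes A': "A' = (\<lambda>i. g (B (i - 1)) (A i) (B i))"
  shows "even_odd_step g (interleave A B) = interleave A' (\<lambda>i. g (A' i) (B i) (A' (i + 1)))"
proof -
  have at_even: "even_odd_step g (interleave A B) (2 * i) = A' i" for i
  proof -
    have "2 * i - 1 = 2 * (i - 1) + 1" by simp
    then have "interleave A B (2 * i - 1) = B (i - 1)" by (simp only: interleave_odd)
    then show ?thesis using A' by (simp add: even_odd_step_even)
  qed
  have at_odd: "even_odd_step g (interleave A B) (2 * i + 1) = g (A' i) (B i) (A' (i + 1))" for i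
  proof -
    have shifts: "2 * i + 1 - 1 = 2 * i" "2 * i + 1 + 1 = 2 * (i + 1)" by simp_all
    have "even_odd_step g (interleave A B) (2 * i + 1)
        = g (even_odd_step g (interleave A B) (2 * i + 1 - 1)) (interleave A B (2 * i + 1))
            (even_odd_step g (interleave A B) (2 * i + 1 + 1))"
      by (rule even_odd_step_odd) simp
    then show ?thesis by (simp only: shifts at_even interleave_odd)
  qed
  show ?thesis
  proof
    fix j :: int
    show "even_odd_step g (interleave A B) j = interleave A' (\<lambda>i. g (A' i) (B i) (A' (i + 1))) j"
      by (cases j rule: interleave_cases) (simp_all only: at_even at_odd interleave_even interleave_odd)
  qed
qed

lemma unpack_2_eq_interleave: "unpack 2 c = interleave (\<lambda>i. c i ! 0) (\<lambda>i. c i ! 1)"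
proof
  fix j :: int
  show "unpack 2 c j = interleave (\<lambda>i. c i ! 0) (\<lambda>i. c i ! 1) j"
    by (cases j rule: interleave_cases) (simp_all add: unpack_def)
qed

lemma pack_2_interleave: "pack 2 (interleave A B) = (\<lambda>i. [A i, B i])"
proof
  fix i :: int
  have "[0..<2] = [0, 1]" by (simp add: upt_rec)
  then show "pack 2 (interleave A B) i = [A i, B i]"
    by (simp add: pack_def)
qed

fun phase_rule :: "('s::finite \<Rightarrow> 's \<Rightarrow> 's \<Rightarrow> 's) \<Rightarrow> three \<Rightarrow> 's \<Rightarrow> 's \<Rightarrow> 's \<Rightarrow> 's" where
  "phase_rule f Q1 x y z = cyclic_add x y"
| "phase_rule f Q2 x y z = f (cyclic_sub x y) y (cyclic_sub z y)"
| "phase_rule f Q3 x y z = x"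

definition block_code :: "'s \<Rightarrow> ('s \<times> three) list" where
  "block_code s = [(s, Q1), (s, Q2)]"

lemma sync_global_translate: "sync_global f (translate v c) = translate v (sync_global f c)"
  by (simp add: sync_global_def translate_def algebra_simps)

lemma funpow_sync_global_translate:
  "(sync_global f ^^ n) (translate v c) = translate v ((sync_global f ^^ n) c)"
  by (induction n) (simp_all add: sync_global_translate)

lemma funpow_even_odd_step_phase_rule:
  fixes f :: "'s::finite \<Rightarrow> 's \<Rightarrow> 's \<Rightarrow> 's"
  shows "(even_odd_step (clocked (phase_rule f)) ^^ 3) (interleave (\<lambda>i. (e i, Q1)) (\<lambda>i. (e i, Q2)))
     = interleave (\<lambda>i. ((sync_global f ^^ 2) e (i - 1), Q1)) (\<lambda>i. ((sync_global f ^^ 2) e (i - 1), Q2))"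
proof -
  let ?step = "even_odd_step (clocked (phase_rule f))"
  have "?step (interleave (\<lambda>i. (e i, Q1)) (\<lambda>i. (e i, Q2)))
      = interleave (\<lambda>i. (cyclic_add (e (i - 1)) (e i), Q3)) (\<lambda>i. (sync_global f e i, Q1))"
    for e :: "int \<Rightarrow> 's"
    by (simp add: even_odd_step_interleave[OF refl] clocked_def cyclic_sub_add_cancel
        cyclic_sub_add_cancel_left sync_global_def)
  moreover have "?step (interleave (\<lambda>i. (p i, Q3)) (\<lambda>i. (u i, Q1)))
      = interleave (\<lambda>i. (u (i - 1), Q2)) (\<lambda>i. (cyclic_add (u (i - 1)) (u i), Q3))"
    for p u :: "int \<Rightarrow> 's"
    by (simp add: even_odd_step_interleave[OF refl] clocked_def)
  moreover have "?step (interleave (\<lambda>i. (u (i - 1), Q2)) (\<lambda>i. (cyclic_add (u (i - 1)) (u i), Q3)))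
      = interleave (\<lambda>i. (sync_global f u (i - 1), Q1)) (\<lambda>i. (sync_global f u (i - 1), Q2))"
    for u :: "int \<Rightarrow> 's"
    by (simp add: even_odd_step_interleave[OF refl] clocked_def cyclic_sub_add_cancel
        cyclic_sub_add_cancel_left sync_global_def)
  ultimately show ?thesis
    by (simp add: numeral_3_eq_3 numeral_2_eq_2)
qed

lemma H_map_cubed_simulates_two_steps:
  fixes f :: "'s::finite \<Rightarrow> 's \<Rightarrow> 's \<Rightarrow> 's"
  shows "map_option (pack 2)
           (opt_iter (H_map (clocked (phase_rule f))) 3 (unpack 2 (translate (-1) (block_code \<circ> c))))
         = Some (block_code \<circ> (sync_global f ^^ 2) c)"
proof -
  let ?e = "translate (-1) c"
  let ?d = "interleave (\<lambda>i. (?e i, Q1)) (\<lambda>i. (?e i, Q2))"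
  have unpacked: "unpack 2 (translate (-1) (block_code \<circ> c)) = ?d"
    by (simp add: unpack_2_eq_interleave block_code_def translate_def)
  have "well_clocked ?d 0"
    unfolding well_clocked_def
  proof
    fix j :: int
    show "snd (?d j) = clock_label (0 + j mod 2)"
      by (cases j rule: interleave_cases) (simp_all add: clock_label_def)
  qed
  then have "opt_iter (H_map (clocked (phase_rule f))) 3 ?d
      = Some ((even_odd_step (clocked (phase_rule f)) ^^ 3) ?d)"
    by (rule opt_iter_H_map_clocked)
  then show ?thesis
    unfolding unpacked funpow_even_odd_step_phase_rule funpow_sync_global_translate
    by (simp add: pack_2_interleave translate_def block_code_def comp_def)
qed

lemma direct_sim_injective_code:
  assumes "inj code" and "\<And>s. code s \<in> S'"
    and "\<And>c. FB (code \<circ> c) = Some (code \<circ> FA c)"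
  shows "direct_sim S' FA FB"
  unfolding direct_sim_def
proof (intro exI[of _ "\<lambda>s. {code s}"] conjI allI impI ballI)
  fix c c'
  assume "c' \<in> cfg_set (\<lambda>s. {code s}) c"
  then have "c' = code \<circ> c"
    by (auto simp: cfg_set_def)
  then show "\<exists>d. FB c' = Some d \<and> d \<in> cfg_set (\<lambda>s. {code s}) (FA c)"
    using assms(3) by (simp add: cfg_set_def)
qed (use assms(1,2) in \<open>auto dest: injD\<close>)

theorem mainTheorem4:
  fixes f :: "'s::finite \<Rightarrow> 's \<Rightarrow> 's \<Rightarrow> 's"
  shows "\<exists>f' :: ('s \<times> three) \<Rightarrow> ('s \<times> three) \<Rightarrow> ('s \<times> three) \<Rightarrow> ('s \<times> three).
           invariantly_simulates f f' (3 / 2)"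
proof -
  let ?g = "clocked (phase_rule f)"
  have sim: "direct_sim {xs. length xs = 2} (sync_global f ^^ 2)
      (\<lambda>c'. map_option (pack 2) (opt_iter (H_map ?g) 3 (unpack 2 (translate (-1) c'))))"
  proof (rule direct_sim_injective_code)
    show "inj (block_code :: 's \<Rightarrow> _)"
      by (rule injI) (simp add: block_code_def)
    show "block_code s \<in> {xs. length xs = 2}" for s :: 's
      by (simp add: block_code_def)
    show "map_option (pack 2) (opt_iter (H_map ?g) 3 (unpack 2 (translate (-1) (block_code \<circ> c))))
        = Some (block_code \<circ> (sync_global f ^^ 2) c)" for c
      by (rule H_map_cubed_simulates_two_steps)
  qed
  show ?thesis
    unfolding invariantly_simulates_def
    by (rule exI[of _ ?g], rule exI[of _ "2 :: nat"], rule exI[of _ "-1 :: int"],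
        rule exI[of _ "2 :: nat"], rule exI[of _ "3 :: nat"]) (use sim in simp)
qed

end
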